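(* Let $\Gamma$ be a connected quartic graph on $n\ge 11$ vertices whose algebraic connectivity $\mu=\mu(\Gamma)$ is minimum among all connected quartic graphs on $n$ vertices. Then: if $n\ge 11$, $\mu<0.355$; if $n\ge13$, $\mu<0.268$; if $n\ge18$, $\mu<0.129$; if $n\ge21$, $\mu<0.091$; if $n\ge 26$, $\mu<0.059$.
   Context: Quartic means 4-regular; graphs are finite and simple. The algebraic connectivity is the second smallest eigenvalue of the Laplacian $L=\Delta-A$. *)

theory Defs
  imports "Jordan_Normal_Form.Char_Poly" "HOL-Library.Multiset"
begin

definition simple_graph :: "nat \<Rightarrow> (nat \<Rightarrow> nat \<Rightarrow> bool) \<Rightarrow> bool" where
  "simple_graph n E \<longleftrightarrow>
     (\<forall>i j. E i j \<longrightarrow> i < n \<and> j < n) \<and> (\<forall>i j. E i j \<longrightarrow> E j i) \<and> (\<forall>i. \<not> E i i)"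

definition degree :: "nat \<Rightarrow> (nat \<Rightarrow> nat \<Rightarrow> bool) \<Rightarrow> nat \<Rightarrow> nat" where
  "degree n E i = card {j. j < n \<and> E i j}"

definition quartic :: "nat \<Rightarrow> (nat \<Rightarrow> nat \<Rightarrow> bool) \<Rightarrow> bool" where
  "quartic n E \<longleftrightarrow> simple_graph n E \<and> (\<forall>i<n. degree n E i = 4)"

definition connected_graph :: "nat \<Rightarrow> (nat \<Rightarrow> nat \<Rightarrow> bool) \<Rightarrow> bool" where
  "connected_graph n E \<longleftrightarrow> (\<forall>i<n. \<forall>j<n. E\<^sup>*\<^sup>* i j)"

definition laplacian :: "nat \<Rightarrow> (nat \<Rightarrow> nat \<Rightarrow> bool) \<Rightarrow> real mat" where
  "laplacian n E = mat n n (\<lambda>(i, j). if i = j then real (degree n E i)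
                                     else if E i j then -1 else 0)"

text \<open>Eigenvalues with multiplicity (roots of the characteristic polynomial; all real since L
  is real symmetric), sorted increasingly; the algebraic connectivity is the second one.\<close>
definition laplacian_eigenvalues :: "nat \<Rightarrow> (nat \<Rightarrow> nat \<Rightarrow> bool) \<Rightarrow> real list" where
  "laplacian_eigenvalues n E = sorted_list_of_multiset (proots (char_poly (laplacian n E)))"

definition algebraic_connectivity :: "nat \<Rightarrow> (nat \<Rightarrow> nat \<Rightarrow> bool) \<Rightarrow> real" where
  "algebraic_connectivity n E = laplacian_eigenvalues n E ! 1"

end

theory Submission
  imports Defs "Jordan_Normal_Form.Spectral_Radius"
begin

text \<open>Since the algebraic connectivity of the given graph is minimal, it suffices to exhibit, for
  every order n \<ge> 11, one connected quartic graph whose algebraic connectivity is below the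
  bound. We take path-like graphs: two small end gadgets joined by a chain of copies of K4
  separated by cut vertices. By orthogonal diagonalisation of the (symmetric) Laplacian, its second
  smallest eigenvalue is at most the Rayleigh quotient of any nonzero vector orthogonal to the
  all-ones vector. For n \<ge> 49 the linear vector already gives the bound, since all edges are
  short; for 11 \<le> n \<le> 48 explicit integer test vectors are checked by evaluation.\<close>

section \<open>Orthogonal diagonalisation of real symmetric matrices\<close>

lemma real_scalar_prod_self_pos:
  fixes v :: "real vec"
  assumes "v \<in> carrier_vec n" "v \<noteq> 0\<^sub>v n"
  shows "v \<bullet> v > 0"
  using conjugate_square_greater_0_vec[OF assms(1)] assms(2) by simp

lemma conjugate_mult_mat_vec_of_real:
  assumes A: "A \<in> carrier_mat n n" and v: "v \<in> carrier_vec n"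
  shows "conjugate (map_mat complex_of_real A *\<^sub>v v) = map_mat complex_of_real A *\<^sub>v conjugate v"
proof (rule eq_vecI)
  let ?Ac = "map_mat complex_of_real A"
  fix i assume "i < dim_vec (?Ac *\<^sub>v conjugate v)"
  hence i: "i < n" using A by simp
  have "conjugate (row ?Ac i \<bullet> v) = conjugate (row ?Ac i) \<bullet> conjugate v"
    using A v i by (intro conjugate_sprod_vec[of _ n]) auto
  also have "conjugate (row ?Ac i) = row ?Ac i"
    using A i by (intro eq_vecI) auto
  finally show "conjugate (?Ac *\<^sub>v v) $ i = (?Ac *\<^sub>v conjugate v) $ i"
    using A v i by simp
qed (use A v in auto)

lemma real_symmetric_complex_eigenvalue_real:
  fixes A :: "real mat"
  assumes A: "A \<in> carrier_mat n n" and sym: "transpose_mat A = A"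
    and ev: "eigenvalue (map_mat complex_of_real A) a"
  shows "Im a = 0"
proof -
  define Ac where "Ac = map_mat complex_of_real A"
  have Ac: "Ac \<in> carrier_mat n n" and symAc: "transpose_mat Ac = Ac"
    unfolding Ac_def map_mat_transpose sym using A by auto
  obtain v where v: "v \<in> carrier_vec n" and v0: "v \<noteq> 0\<^sub>v n" and Av: "Ac *\<^sub>v v = a \<cdot>\<^sub>v v"
    using ev Ac unfolding eigenvalue_def eigenvector_def Ac_def by auto
  define w where "w = conjugate v"
  have w: "w \<in> carrier_vec n" unfolding w_def using v by simp
  have "a * (v \<bullet> w) = (Ac *\<^sub>v v) \<bullet> w" unfolding Av using v w by simp
  also have "\<dots> = v \<bullet> (Ac *\<^sub>v w)"
    using transpose_vec_mult_scalar[OF Ac w v] unfolding symAc .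
  also have "Ac *\<^sub>v w = conjugate (a \<cdot>\<^sub>v v)"
    unfolding w_def Ac_def conjugate_mult_mat_vec_of_real[OF A v, folded Ac_def, unfolded Av] ..
  also have "v \<bullet> \<dots> = cnj a * (v \<bullet> w)"
    unfolding conjugate_smult_vec w_def using v by simp
  finally have "a * (v \<bullet> w) = cnj a * (v \<bullet> w)" .
  moreover have "v \<bullet> w \<noteq> 0" unfolding w_def using v v0 by simp
  ultimately have "a = cnj a" by simp
  thus ?thesis by (metis cnj.sel(2) neg_equal_zero)
qed

lemma real_symmetric_has_eigenvalue:
  fixes A :: "real mat"
  assumes A: "A \<in> carrier_mat n n" and sym: "transpose_mat A = A" and n: "n > 0"
  shows "\<exists>l. eigenvalue A l"
proof -
  have Ac: "map_mat complex_of_real A \<in> carrier_mat n n" using A by simp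
  obtain a where a: "eigenvalue (map_mat complex_of_real A) a"
    using spectrum_non_empty[OF Ac n] unfolding spectrum_def by auto
  have "a = complex_of_real (Re a)"
    using real_symmetric_complex_eigenvalue_real[OF A sym a] by (simp add: complex_eq_iff)
  hence "complex_of_real (poly (char_poly A) (Re a)) = poly (char_poly (map_mat complex_of_real A)) a"
    unfolding of_real_hom.char_poly_hom[OF A] by (metis of_real_hom.poly_map_poly)
  also have "\<dots> = 0" using a eigenvalue_root_char_poly[OF Ac] by simp
  finally show ?thesis using eigenvalue_root_char_poly[OF A] by auto
qed

lemma mult_unit_vec_index:
  fixes A :: "'a :: semiring_1 mat"
  assumes "A \<in> carrier_mat n m" "i < n" "j < m"
  shows "(A *\<^sub>v unit_vec m j) $ i = A $$ (i, j)"
  using assms by (simp add: scalar_prod_right_unit)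

lemma mat_eq_by_mult_vec:
  fixes A B :: "'a :: semiring_1 mat"
  assumes A: "A \<in> carrier_mat n m" and B: "B \<in> carrier_mat n m"
    and AB: "\<And>v. v \<in> carrier_vec m \<Longrightarrow> A *\<^sub>v v = B *\<^sub>v v"
  shows "A = B"
proof (rule eq_matI)
  fix i j assume "i < dim_row B" "j < dim_col B"
  hence i: "i < n" and j: "j < m" using B by auto
  have "A $$ (i, j) = (A *\<^sub>v unit_vec m j) $ i" using mult_unit_vec_index[OF A i j] by simp
  also have "\<dots> = (B *\<^sub>v unit_vec m j) $ i" using AB[of "unit_vec m j"] by simp
  also have "\<dots> = B $$ (i, j)" using mult_unit_vec_index[OF B i j] .
  finally show "A $$ (i, j) = B $$ (i, j)" .
qed (use A B in auto)

definition reflection_mat :: "nat \<Rightarrow> real vec \<Rightarrow> real mat" where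
  "reflection_mat n w = mat n n (\<lambda>(i, j). (if i = j then 1 else 0) - 2 / (w \<bullet> w) * (w $ i * w $ j))"

lemma reflection_mat_dim [simp]:
  "dim_row (reflection_mat n w) = n" "dim_col (reflection_mat n w) = n"
  unfolding reflection_mat_def by simp_all

lemma reflection_mat_carrier: "reflection_mat n w \<in> carrier_mat n n"
  by (simp add: carrier_matI)

lemma transpose_reflection_mat: "transpose_mat (reflection_mat n w) = reflection_mat n w"
  unfolding reflection_mat_def by (rule eq_matI) (auto simp: mult.commute)

lemma reflection_mat_mult_vec:
  assumes w: "w \<in> carrier_vec n" and v: "v \<in> carrier_vec n"
  shows "reflection_mat n w *\<^sub>v v = v - (2 / (w \<bullet> w) * (w \<bullet> v)) \<cdot>\<^sub>v w"
proof (rule eq_vecI)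
  fix i assume "i < dim_vec (v - (2 / (w \<bullet> w) * (w \<bullet> v)) \<cdot>\<^sub>v w)"
  hence i: "i < n" using w by simp
  have "(reflection_mat n w *\<^sub>v v) $ i = row (reflection_mat n w) i \<bullet> v" using i by simp
  also have "row (reflection_mat n w) i = unit_vec n i - (2 / (w \<bullet> w) * w $ i) \<cdot>\<^sub>v w"
    unfolding reflection_mat_def using i w by (intro eq_vecI) (auto simp: mult.assoc)
  also have "\<dots> \<bullet> v = v $ i - 2 / (w \<bullet> w) * w $ i * (w \<bullet> v)"
    using i v w by (simp add: minus_scalar_prod_distrib[of _ n] smult_scalar_prod_distrib)
  finally show "(reflection_mat n w *\<^sub>v v) $ i = (v - (2 / (w \<bullet> w) * (w \<bullet> v)) \<cdot>\<^sub>v w) $ i"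
    using i w by simp
qed (use w in simp)

lemma reflection_mat_involution:
  assumes w: "w \<in> carrier_vec n" and w0: "w \<noteq> 0\<^sub>v n"
  shows "reflection_mat n w * reflection_mat n w = 1\<^sub>m n"
proof (rule mat_eq_by_mult_vec)
  fix v :: "real vec" assume v: "v \<in> carrier_vec n"
  define c where "c = 2 / (w \<bullet> w)"
  have cw: "c * (w \<bullet> w) = 2" unfolding c_def using real_scalar_prod_self_pos[OF w w0] by simp
  have Rv: "reflection_mat n w *\<^sub>v v = v - (c * (w \<bullet> v)) \<cdot>\<^sub>v w"
    unfolding c_def by (rule reflection_mat_mult_vec[OF w v])
  have Rv_carrier: "reflection_mat n w *\<^sub>v v \<in> carrier_vec n"
    by (rule mult_mat_vec_carrier[OF reflection_mat_carrier v])
  have wRv: "w \<bullet> (reflection_mat n w *\<^sub>v v) = - (w \<bullet> v)"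
    unfolding Rv using v w cw by (simp add: scalar_prod_minus_distrib algebra_simps)
  have "reflection_mat n w *\<^sub>v (reflection_mat n w *\<^sub>v v)
      = reflection_mat n w *\<^sub>v v - (c * (w \<bullet> (reflection_mat n w *\<^sub>v v))) \<cdot>\<^sub>v w"
    unfolding c_def by (rule reflection_mat_mult_vec[OF w Rv_carrier])
  also have "\<dots> = (v - (c * (w \<bullet> v)) \<cdot>\<^sub>v w) - (- c * (w \<bullet> v)) \<cdot>\<^sub>v w"
    unfolding wRv unfolding Rv by simp
  also have "\<dots> = v" using v w by (intro eq_vecI) auto
  finally have "reflection_mat n w *\<^sub>v (reflection_mat n w *\<^sub>v v) = v" .
  thus "(reflection_mat n w * reflection_mat n w) *\<^sub>v v = 1\<^sub>m n *\<^sub>v v"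
    using v by (simp add: assoc_mult_mat_vec[OF reflection_mat_carrier reflection_mat_carrier v])
qed (auto simp: reflection_mat_carrier)

text \<open>Householder: the reflection in the hyperplane orthogonal to u - e0 swaps the unit vectors
  u and e0.\<close>
lemma householder_reflection:
  fixes u :: "real vec"
  assumes u: "u \<in> carrier_vec n" and n: "n > 0" and uu: "u \<bullet> u = 1"
  shows "\<exists>H. H \<in> carrier_mat n n \<and> transpose_mat H = H \<and> H * H = 1\<^sub>m n \<and> H *\<^sub>v u = unit_vec n 0"
proof (cases "u = unit_vec n 0")
  case True
  thus ?thesis by (intro exI[of _ "1\<^sub>m n"]) auto
next
  case False
  define w where "w = u - unit_vec n 0"
  have w: "w \<in> carrier_vec n" unfolding w_def using u by simp
  have "u = w + unit_vec n 0" unfolding w_def using u by (intro eq_vecI) auto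
  hence w0: "w \<noteq> 0\<^sub>v n" using False by auto
  have ww: "w \<bullet> w = 2 * (1 - u $ 0)" and wu: "w \<bullet> u = 1 - u $ 0"
    unfolding w_def using u uu n
    by (simp_all add: minus_scalar_prod_distrib scalar_prod_minus_distrib scalar_prod_left_unit
        scalar_prod_right_unit)
  have "2 / (w \<bullet> w) * (w \<bullet> u) = 1"
    using real_scalar_prod_self_pos[OF w w0] unfolding ww wu by simp
  hence "reflection_mat n w *\<^sub>v u = u - w" unfolding reflection_mat_mult_vec[OF w u] by simp
  also have "\<dots> = unit_vec n 0" unfolding w_def using u by (intro eq_vecI) auto
  finally have "reflection_mat n w *\<^sub>v u = unit_vec n 0" .
  thus ?thesis using reflection_mat_carrier transpose_reflection_mat reflection_mat_involution[OF w w0]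
    by blast
qed

lemma real_symmetric_unit_eigenvector:
  fixes A :: "real mat"
  assumes A: "A \<in> carrier_mat n n" and sym: "transpose_mat A = A" and n: "n > 0"
  shows "\<exists>l u. u \<in> carrier_vec n \<and> u \<bullet> u = 1 \<and> A *\<^sub>v u = l \<cdot>\<^sub>v u"
proof -
  obtain l v where v: "v \<in> carrier_vec n" and v0: "v \<noteq> 0\<^sub>v n" and Av: "A *\<^sub>v v = l \<cdot>\<^sub>v v"
    using real_symmetric_has_eigenvalue[OF A sym n] A unfolding eigenvalue_def eigenvector_def by auto
  define u where "u = (1 / sqrt (v \<bullet> v)) \<cdot>\<^sub>v v"
  have "u \<in> carrier_vec n" unfolding u_def using v by simp
  moreover have "u \<bullet> u = 1" unfolding u_def using v real_scalar_prod_self_pos[OF v v0]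
    by (simp add: real_sqrt_mult[symmetric])
  moreover have "A *\<^sub>v u = l \<cdot>\<^sub>v u" unfolding u_def using mult_mat_vec[OF A v] Av v
    by (auto simp: smult_smult_assoc mult.commute)
  ultimately show ?thesis by blast
qed

lemma real_symmetric_deflation:
  fixes A :: "real mat"
  assumes A: "A \<in> carrier_mat (Suc n) (Suc n)" and sym: "transpose_mat A = A"
  shows "\<exists>H l B. H \<in> carrier_mat (Suc n) (Suc n) \<and> transpose_mat H = H \<and> H * H = 1\<^sub>m (Suc n)
    \<and> B \<in> carrier_mat n n \<and> transpose_mat B = B
    \<and> H * A * H = four_block_mat (mat 1 1 (\<lambda>_. l)) (0\<^sub>m 1 n) (0\<^sub>m n 1) B"
proof -
  obtain l u where u: "u \<in> carrier_vec (Suc n)" and uu: "u \<bullet> u = 1" and Au: "A *\<^sub>v u = l \<cdot>\<^sub>v u"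
    using real_symmetric_unit_eigenvector[OF A sym] by blast
  obtain H where H: "H \<in> carrier_mat (Suc n) (Suc n)" and Hs: "transpose_mat H = H"
    and HH: "H * H = 1\<^sub>m (Suc n)" and Hu: "H *\<^sub>v u = unit_vec (Suc n) 0"
    using householder_reflection[OF u _ uu] by auto
  define e where "e = (unit_vec (Suc n) 0 :: real vec)"
  have e: "e \<in> carrier_vec (Suc n)" unfolding e_def by simp
  have He: "H *\<^sub>v e = u"
    unfolding e_def Hu[symmetric] using H u HH by (simp add: assoc_mult_mat_vec[symmetric, OF H H u])
  define A' where "A' = H * A * H"
  have A': "A' \<in> carrier_mat (Suc n) (Suc n)" unfolding A'_def using H A by simp
  have "transpose_mat A' = transpose_mat H * transpose_mat (H * A)"
    unfolding A'_def using H A by (intro transpose_mult[of _ "Suc n" "Suc n"]) auto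
  also have "transpose_mat (H * A) = transpose_mat A * transpose_mat H"
    using H A by (intro transpose_mult[of _ "Suc n" "Suc n"]) auto
  finally have symA': "transpose_mat A' = A'" unfolding A'_def Hs sym using H A by simp
  have "A' *\<^sub>v e = (H * A) *\<^sub>v (H *\<^sub>v e)"
    unfolding A'_def using H A e by (intro assoc_mult_mat_vec) auto
  also have "\<dots> = H *\<^sub>v (A *\<^sub>v (H *\<^sub>v e))"
    using H A e by (intro assoc_mult_mat_vec) auto
  also have "\<dots> = l \<cdot>\<^sub>v e" unfolding He Au using mult_mat_vec[OF H u] Hu e_def by simp
  finally have A'e: "A' *\<^sub>v e = l \<cdot>\<^sub>v e" .
  have col0: "A' $$ (i, 0) = (if i = 0 then l else 0)" if i: "i < Suc n" for i
    using arg_cong[OF A'e, of "\<lambda>x. x $ i"] mult_unit_vec_index[OF A' i] i unfolding e_def by simp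
  have symE: "A' $$ (i, j) = A' $$ (j, i)" if "i < Suc n" "j < Suc n" for i j
    using arg_cong[OF symA', of "\<lambda>M. M $$ (j, i)"] that A' by auto
  define B where "B = mat n n (\<lambda>(i, j). A' $$ (Suc i, Suc j))"
  have "B \<in> carrier_mat n n" "transpose_mat B = B"
    unfolding B_def by (auto simp: symE)
  moreover have "A' = four_block_mat (mat 1 1 (\<lambda>_. l)) (0\<^sub>m 1 n) (0\<^sub>m n 1) B"
    using A' col0 symE by (intro eq_matI) (auto simp: B_def)
  ultimately show ?thesis using H Hs HH unfolding A'_def by blast
qed

lemma real_symmetric_orthogonal_diagonalization:
  fixes A :: "real mat"
  assumes "A \<in> carrier_mat n n" "transpose_mat A = A"
  shows "\<exists>Q. Q \<in> carrier_mat n n \<and> transpose_mat Q * Q = 1\<^sub>m n \<and> diagonal_mat (transpose_mat Q * A * Q)"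
  using assms
proof (induction n arbitrary: A)
  case 0
  show ?case by (intro exI[of _ "1\<^sub>m 0"]) (auto simp: diagonal_mat_def)
next
  case (Suc n A)
  obtain H l B where H: "H \<in> carrier_mat (Suc n) (Suc n)" and Hs: "transpose_mat H = H"
    and HH: "H * H = 1\<^sub>m (Suc n)" and B: "B \<in> carrier_mat n n" and symB: "transpose_mat B = B"
    and HAH: "H * A * H = four_block_mat (mat 1 1 (\<lambda>_. l)) (0\<^sub>m 1 n) (0\<^sub>m n 1) B"
    using real_symmetric_deflation[OF Suc.prems] by blast
  obtain P where P: "P \<in> carrier_mat n n" and PP: "transpose_mat P * P = 1\<^sub>m n"
    and PBP: "diagonal_mat (transpose_mat P * B * P)" using Suc.IH[OF B symB] by blast
  define S where "S = four_block_mat (1\<^sub>m 1) (0\<^sub>m 1 n) (0\<^sub>m n 1) P"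
  have S: "S \<in> carrier_mat (Suc n) (Suc n)" unfolding S_def using P by auto
  have ST: "transpose_mat S = four_block_mat (1\<^sub>m 1) (0\<^sub>m 1 n) (0\<^sub>m n 1) (transpose_mat P)"
    unfolding S_def using P by (subst transpose_four_block_mat) auto
  have ST': "transpose_mat S \<in> carrier_mat (Suc n) (Suc n)" using S by simp
  have STS: "transpose_mat S * S = 1\<^sub>m (Suc n)"
    unfolding ST unfolding S_def using P PP by (subst mult_four_block_mat) auto
  define Q where "Q = H * S"
  have Q: "Q \<in> carrier_mat (Suc n) (Suc n)" unfolding Q_def using H S by simp
  have QT: "transpose_mat Q = transpose_mat S * H"
    unfolding Q_def using H S Hs by (simp add: transpose_mult[of _ "Suc n" "Suc n"])
  have "transpose_mat Q * Q = (transpose_mat S * H) * (H * S)" unfolding QT by (simp add: Q_def)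
  also have "\<dots> = transpose_mat S * (H * (H * S))"
    using H S by (intro assoc_mult_mat[OF ST' H]) auto
  also have "H * (H * S) = (H * H) * S" by (rule assoc_mult_mat[symmetric, OF H H S])
  also have "transpose_mat S * \<dots> = 1\<^sub>m (Suc n)" using HH STS S by simp
  finally have QQ: "transpose_mat Q * Q = 1\<^sub>m (Suc n)" .
  have "transpose_mat Q * A * Q = ((transpose_mat S * H) * A) * (H * S)"
    unfolding QT by (simp add: Q_def)
  also have "\<dots> = transpose_mat S * (H * A * H) * S"
    using ST' H Suc.prems(1) S
    by (simp add: assoc_mult_mat[of _ "Suc n" "Suc n" _ "Suc n" _ "Suc n"])
  also have "\<dots> = four_block_mat (mat 1 1 (\<lambda>_. l)) (0\<^sub>m 1 n) (0\<^sub>m n 1) (transpose_mat P * B * P)"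
    unfolding HAH ST unfolding S_def using P B
    by (subst mult_four_block_mat; auto)+
  finally have "diagonal_mat (transpose_mat Q * A * Q)"
    using PBP P B unfolding diagonal_mat_def by auto
  thus ?case using Q QQ by blast
qed

section \<open>Bounding the second smallest eigenvalue by a test vector\<close>

lemma scalar_prod_lessThan_sum:
  assumes "w \<in> carrier_vec n"
  shows "v \<bullet> w = (\<Sum>i<n. v $ i * w $ i)"
  using assms by (simp add: scalar_prod_def lessThan_atLeast0)

lemma mult_mat_vec_index_sum:
  assumes "A \<in> carrier_mat n m" "v \<in> carrier_vec m" "i < n"
  shows "(A *\<^sub>v v) $ i = (\<Sum>j<m. A $$ (i, j) * v $ j)"
  using assms by (simp add: scalar_prod_lessThan_sum)

lemma proots_prod_linear: "proots (\<Prod>a\<leftarrow>as. [:- a, 1:]) = mset (as :: real list)"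
proof (induct as)
  case (Cons a as)
  have "(\<Prod>a\<leftarrow>as. [:- a, 1:]) \<noteq> (0 :: real poly)"
    by (auto simp: prod_list_zero_iff)
  hence "proots ([:- a, 1:] * (\<Prod>a\<leftarrow>as. [:- a, 1:])) = add_mset a (proots (\<Prod>a\<leftarrow>as. [:- a, 1:]))"
    by (subst proots_mult) auto
  thus ?case using Cons by simp
qed simp

lemma nonzero_vec_dim_pos: "x \<in> carrier_vec n \<Longrightarrow> x \<noteq> 0\<^sub>v n \<Longrightarrow> n > 0"
  by (metis carrier_vecD eq_vecI gr0I index_zero_vec(2) less_nat_zero_code)

lemma orthogonal_conj_cancel:
  fixes A :: "'a :: field mat"
  assumes A: "A \<in> carrier_mat n n" and Q: "Q \<in> carrier_mat n n" and QQ: "transpose_mat Q * Q = 1\<^sub>m n"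
  shows "Q * (transpose_mat Q * A * Q) * transpose_mat Q = A"
proof -
  have QT: "transpose_mat Q \<in> carrier_mat n n" using Q by simp
  have "Q * transpose_mat Q = 1\<^sub>m n" by (rule mat_mult_left_right_inverse[OF QT Q QQ])
  moreover have "Q * (transpose_mat Q * A * Q) * transpose_mat Q
      = (Q * transpose_mat Q) * A * (Q * transpose_mat Q)"
    using Q QT A by (simp add: assoc_mult_mat[of _ n n _ n _ n])
  ultimately show ?thesis using A by simp
qed

lemma sorted_eigenvalues_orthogonal_diag:
  fixes A :: "real mat"
  assumes A: "A \<in> carrier_mat n n" and Q: "Q \<in> carrier_mat n n" and QQ: "transpose_mat Q * Q = 1\<^sub>m n"
    and D: "diagonal_mat (transpose_mat Q * A * Q)"
  shows "sorted_list_of_multiset (proots (char_poly A)) = sort (diag_mat (transpose_mat Q * A * Q))"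
proof -
  define D where "D = transpose_mat Q * A * Q"
  have QT: "transpose_mat Q \<in> carrier_mat n n" using Q by simp
  have D: "D \<in> carrier_mat n n" "diagonal_mat D" unfolding D_def using Q A D by auto
  have QQ': "Q * transpose_mat Q = 1\<^sub>m n" by (rule mat_mult_left_right_inverse[OF QT Q QQ])
  have "similar_mat A D"
    using A D Q QT QQ QQ' orthogonal_conj_cancel[OF A Q QQ, folded D_def]
    by (intro similar_matI[where n = n and P = Q and Q = "transpose_mat Q"]) auto
  moreover have "upper_triangular D" using D unfolding diagonal_mat_def upper_triangular_def by auto
  ultimately have "char_poly A = (\<Prod>a\<leftarrow>diag_mat D. [:- a, 1:])"
    using char_poly_similar char_poly_upper_triangular[OF D(1)] by metis
  thus ?thesis unfolding D_def by (simp add: proots_prod_linear)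
qed

lemma quadratic_form_orthogonal_diag:
  fixes A :: "real mat"
  assumes A: "A \<in> carrier_mat n n" and Q: "Q \<in> carrier_mat n n" and QQ: "transpose_mat Q * Q = 1\<^sub>m n"
    and D: "diagonal_mat (transpose_mat Q * A * Q)" and z: "z \<in> carrier_vec n"
  defines "y \<equiv> transpose_mat Q *\<^sub>v z"
  shows "z \<bullet> (A *\<^sub>v z) = (\<Sum>i<n. (transpose_mat Q * A * Q) $$ (i, i) * (y $ i)^2)"
    and "z \<bullet> z = (\<Sum>i<n. (y $ i)^2)"
proof -
  define D where "D = transpose_mat Q * A * Q"
  have QT: "transpose_mat Q \<in> carrier_mat n n" using Q by simp
  have Dc: "D \<in> carrier_mat n n" unfolding D_def using Q A by simp
  have QQ': "Q * transpose_mat Q = 1\<^sub>m n" by (rule mat_mult_left_right_inverse[OF QT Q QQ])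
  have y: "y \<in> carrier_vec n" unfolding y_def using QT z by simp
  have AD: "A = Q * D * transpose_mat Q" unfolding D_def using orthogonal_conj_cancel[OF A Q QQ] ..
  have Dy: "(D *\<^sub>v y) $ i = D $$ (i, i) * y $ i" if i: "i < n" for i
  proof -
    have "(D *\<^sub>v y) $ i = (\<Sum>j<n. if j = i then D $$ (i, j) * y $ j else 0)"
      unfolding mult_mat_vec_index_sum[OF Dc y i]
      using D Dc i unfolding D_def diagonal_mat_def by (intro sum.cong) auto
    thus ?thesis using i by simp
  qed
  have zQ: "z \<bullet> (Q *\<^sub>v u) = y \<bullet> u" if u: "u \<in> carrier_vec n" for u
    using transpose_vec_mult_scalar[OF Q u z] comm_scalar_prod[OF y u] unfolding y_def
    by (metis QT z comm_scalar_prod mult_mat_vec_carrier u)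
  have "A *\<^sub>v z = Q *\<^sub>v (D *\<^sub>v y)"
    unfolding AD y_def using Q Dc QT z by (simp add: assoc_mult_mat_vec[of _ n n _ n])
  hence "z \<bullet> (A *\<^sub>v z) = y \<bullet> (D *\<^sub>v y)" using zQ Dc y by simp
  also have "\<dots> = (\<Sum>i<n. y $ i * (D *\<^sub>v y) $ i)"
    using mult_mat_vec_carrier[OF Dc y] by (rule scalar_prod_lessThan_sum)
  also have "\<dots> = (\<Sum>i<n. D $$ (i, i) * (y $ i)^2)"
    using Dy by (intro sum.cong) (auto simp: power2_eq_square)
  finally show "z \<bullet> (A *\<^sub>v z) = (\<Sum>i<n. (transpose_mat Q * A * Q) $$ (i, i) * (y $ i)^2)"
    unfolding D_def .
  have "z = Q *\<^sub>v y" unfolding y_def using Q QT z QQ' by (simp add: assoc_mult_mat_vec[symmetric, of _ n n])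
  hence "z \<bullet> z = y \<bullet> y" using zQ y by metis
  thus "z \<bullet> z = (\<Sum>i<n. (y $ i)^2)" using y by (simp add: scalar_prod_lessThan_sum power2_eq_square)
qed

lemma sort_nth_1_le:
  fixes ds :: "'a :: linorder list"
  assumes j: "j < length ds" and k: "k < length ds" and jk: "j \<noteq> k"
    and dj: "ds ! j \<le> c" and dk: "ds ! k \<le> c"
  shows "sort ds ! 1 \<le> c"
proof (rule ccontr)
  assume gt: "\<not> sort ds ! 1 \<le> c"
  let ?P = "\<lambda>x. x \<le> c"
  have "{i. i < length (sort ds) \<and> ?P (sort ds ! i)} \<subseteq> {0}"
  proof
    fix i assume i: "i \<in> {i. i < length (sort ds) \<and> ?P (sort ds ! i)}"
    have "\<not> 1 \<le> i"
    proof
      assume "1 \<le> i"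
      hence "sort ds ! 1 \<le> sort ds ! i" using i by (intro sorted_nth_mono) auto
      thus False using i gt by auto
    qed
    thus "i \<in> {0}" by simp
  qed
  hence "card {i. i < length (sort ds) \<and> ?P (sort ds ! i)} \<le> 1"
    using card_mono[of "{0::nat}"] by fastforce
  hence "length (filter ?P (sort ds)) \<le> 1" by (simp add: length_filter_conv_card)
  moreover have "length (filter ?P (sort ds)) = length (filter ?P ds)"
    by (metis mset_filter mset_sort size_mset)
  moreover have "card {j, k} \<le> card {i. i < length ds \<and> ?P (ds ! i)}"
    using j k dj dk by (intro card_mono) auto
  hence "2 \<le> length (filter ?P ds)" using jk by (simp add: length_filter_conv_card)
  ultimately show False by simp
qed

lemma weighted_sum_le_other_index:
  fixes d y :: "nat \<Rightarrow> real"
  assumes le: "(\<Sum>i<n. d i * (y i)^2) \<le> c * (\<Sum>i<n. (y i)^2)" and yk: "y k = 0"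
    and pos: "(\<Sum>i<n. (y i)^2) > 0"
  shows "\<exists>j<n. j \<noteq> k \<and> d j \<le> c"
proof (rule ccontr)
  assume "\<not> ?thesis"
  hence gt: "\<And>j. j < n \<Longrightarrow> j \<noteq> k \<Longrightarrow> c < d j" by force
  obtain j where j: "j < n" "(y j)^2 > 0"
    using pos by (metis (no_types, lifting) lessThan_iff not_less sum_nonpos)
  have "j \<noteq> k" using j yk by auto
  have "(\<Sum>i<n. c * (y i)^2) < (\<Sum>i<n. d i * (y i)^2)"
  proof (rule sum_strict_mono_ex1)
    show "\<forall>i\<in>{..<n}. c * (y i)^2 \<le> d i * (y i)^2"
    proof
      fix i assume "i \<in> {..<n}"
      thus "c * (y i)^2 \<le> d i * (y i)^2" using gt[of i] yk by (cases "i = k") (auto intro: mult_right_mono)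
    qed
    show "\<exists>i\<in>{..<n}. c * (y i)^2 < d i * (y i)^2"
      using j \<open>j \<noteq> k\<close> gt[of j] by (intro bexI[of _ j]) auto
  qed simp
  with le show False by (simp add: sum_distrib_left)
qed

lemma rayleigh_test_vector_orthogonal:
  fixes A :: "real mat"
  assumes A: "A \<in> carrier_mat n n" and sym: "transpose_mat A = A"
    and A1: "A *\<^sub>v vec n (\<lambda>_. 1) = 0\<^sub>v n"
    and x: "x \<in> carrier_vec n" and x0: "x \<noteq> 0\<^sub>v n" and x1: "x \<bullet> vec n (\<lambda>_. 1) = 0"
    and xAx: "x \<bullet> (A *\<^sub>v x) \<le> c * (x \<bullet> x)" and c: "c \<ge> 0"
    and w: "w \<in> carrier_vec n"
  shows "\<exists>z \<in> carrier_vec n. z \<noteq> 0\<^sub>v n \<and> w \<bullet> z = 0 \<and> z \<bullet> (A *\<^sub>v z) \<le> c * (z \<bullet> z)"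
proof (cases "w \<bullet> x = 0")
  case True
  thus ?thesis using x x0 xAx by blast
next
  case False
  define one where "one = vec n (\<lambda>_. 1 :: real)"
  have one: "one \<in> carrier_vec n" unfolding one_def by simp
  define p where "p = w \<bullet> x"
  define q where "q = w \<bullet> one"
  define z where "z = q \<cdot>\<^sub>v x - p \<cdot>\<^sub>v one"
  have z: "z \<in> carrier_vec n" unfolding z_def using x one by simp
  have n: "n > 0" using nonzero_vec_dim_pos[OF x x0] .
  have "w \<bullet> z = q * p - p * q"
    unfolding z_def p_def q_def using w x one by (simp add: scalar_prod_minus_distrib)
  hence wz: "w \<bullet> z = 0" by simp
  have one_x: "one \<bullet> x = 0" using x1 comm_scalar_prod[OF one x] unfolding one_def by simp
  have one_Ax: "one \<bullet> (A *\<^sub>v x) = 0"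
    using transpose_vec_mult_scalar[OF A x one] sym A1 x unfolding one_def by simp
  have Az: "A *\<^sub>v z = q \<cdot>\<^sub>v (A *\<^sub>v x)"
    unfolding z_def using A x one A1 unfolding one_def
    by (intro eq_vecI) (auto simp: mult_minus_distrib_mat_vec mult_mat_vec)
  have one_one: "one \<bullet> one = real n" unfolding one_def by (simp add: scalar_prod_def)
  have zz: "z \<bullet> z = q^2 * (x \<bullet> x) + p^2 * real n"
    unfolding z_def using x one x1 one_x one_one
    by (simp add: minus_scalar_prod_distrib scalar_prod_minus_distrib one_def power2_eq_square
        algebra_simps)
  have "z \<bullet> (A *\<^sub>v z) = q^2 * (x \<bullet> (A *\<^sub>v x))"
    unfolding Az unfolding z_def using x one A one_Ax
    by (simp add: minus_scalar_prod_distrib power2_eq_square)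
  also have "\<dots> \<le> q^2 * (c * (x \<bullet> x))" using xAx by (simp add: mult_left_mono)
  also have "\<dots> \<le> c * (z \<bullet> z)" unfolding zz using c by (simp add: algebra_simps)
  finally have "z \<bullet> (A *\<^sub>v z) \<le> c * (z \<bullet> z)" .
  moreover have "z \<noteq> 0\<^sub>v n"
  proof
    assume "z = 0\<^sub>v n"
    hence "q^2 * (x \<bullet> x) + p^2 * real n = 0" using zz by simp
    moreover have "p^2 * real n > 0" using False n unfolding p_def by simp
    moreover have "q^2 * (x \<bullet> x) \<ge> 0" using real_scalar_prod_self_pos[OF x x0] by simp
    ultimately show False by linarith
  qed
  ultimately show ?thesis using z wz by blast
qed

lemma second_smallest_eigenvalue_le:
  fixes A :: "real mat"
  assumes A: "A \<in> carrier_mat n n" and sym: "transpose_mat A = A"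
    and A1: "A *\<^sub>v vec n (\<lambda>_. 1) = 0\<^sub>v n"
    and x: "x \<in> carrier_vec n" and x0: "x \<noteq> 0\<^sub>v n" and x1: "x \<bullet> vec n (\<lambda>_. 1) = 0"
    and xAx: "x \<bullet> (A *\<^sub>v x) \<le> c * (x \<bullet> x)" and c: "c \<ge> 0"
  shows "sorted_list_of_multiset (proots (char_poly A)) ! 1 \<le> c"
proof -
  obtain Q where Q: "Q \<in> carrier_mat n n" and QQ: "transpose_mat Q * Q = 1\<^sub>m n"
    and diag: "diagonal_mat (transpose_mat Q * A * Q)"
    using real_symmetric_orthogonal_diagonalization[OF A sym] by blast
  define d where "d i = (transpose_mat Q * A * Q) $$ (i, i)" for i
  have n: "n > 0" using nonzero_vec_dim_pos[OF x x0] .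
  define k where "k = arg_min_on d {..<n}"
  have k: "k < n" and kmin: "\<And>i. i < n \<Longrightarrow> d k \<le> d i"
    using arg_min_if_finite[of "{..<n}" d] n unfolding k_def by (auto simp: not_less)
  obtain z where z: "z \<in> carrier_vec n" and z0: "z \<noteq> 0\<^sub>v n"
    and zk: "row (transpose_mat Q) k \<bullet> z = 0" and zAz: "z \<bullet> (A *\<^sub>v z) \<le> c * (z \<bullet> z)"
    using rayleigh_test_vector_orthogonal[OF A sym A1 x x0 x1 xAx c, of "row (transpose_mat Q) k"] Q k
    by auto
  define y where "y i = (transpose_mat Q *\<^sub>v z) $ i" for i
  have "(\<Sum>i<n. d i * (y i)^2) \<le> c * (\<Sum>i<n. (y i)^2)" and "(\<Sum>i<n. (y i)^2) > 0"
    using quadratic_form_orthogonal_diag[OF A Q QQ diag z] zAz real_scalar_prod_self_pos[OF z z0]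
    unfolding d_def y_def by auto
  moreover have "y k = 0" unfolding y_def using zk Q k by simp
  ultimately obtain j where j: "j < n" "j \<noteq> k" "d j \<le> c"
    using weighted_sum_le_other_index by blast
  have "d k \<le> c" using kmin[OF j(1)] j(3) by simp
  hence "sort (diag_mat (transpose_mat Q * A * Q)) ! 1 \<le> c"
    using sort_nth_1_le[of j _ k c] j k Q A unfolding d_def diag_mat_def by simp
  thus ?thesis unfolding sorted_eigenvalues_orthogonal_diag[OF A Q QQ diag] .
qed

section \<open>The Laplacian quadratic form\<close>

lemma degree_eq_sum:
  "real (degree n F i) = (\<Sum>j<n. if F i j then 1 else 0)"
proof -
  have "(\<Sum>j<n. if F i j then 1 else 0) = (\<Sum>j\<in>{j. j < n \<and> F i j}. 1 :: real)"
    by (rule sum.mono_neutral_cong_right) auto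
  thus ?thesis unfolding degree_def by simp
qed

context
  fixes n :: nat and F :: "nat \<Rightarrow> nat \<Rightarrow> bool"
  assumes F: "simple_graph n F"
begin

lemma laplacian_index:
  assumes "i < n" "j < n"
  shows "laplacian n F $$ (i, j) = (if i = j then real (degree n F i) else 0) - (if F i j then 1 else 0)"
  using assms F unfolding laplacian_def simple_graph_def by auto

lemma laplacian_carrier: "laplacian n F \<in> carrier_mat n n"
  unfolding laplacian_def by simp

lemma transpose_laplacian: "transpose_mat (laplacian n F) = laplacian n F"
  using F laplacian_carrier unfolding simple_graph_def by (intro eq_matI) (auto simp: laplacian_index)

lemma laplacian_mult_vec_index:
  assumes i: "i < n"
  shows "(laplacian n F *\<^sub>v vec n x) $ i = (\<Sum>j<n. if F i j then x i - x j else 0)"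
proof -
  have "(laplacian n F *\<^sub>v vec n x) $ i
      = (\<Sum>j<n. (if j = i then real (degree n F i) * x j else 0) - (if F i j then x j else 0))"
    unfolding mult_mat_vec_index_sum[OF laplacian_carrier _ i, of "vec n x", simplified]
    by (rule sum.cong) (auto simp: laplacian_index i algebra_simps)
  also have "\<dots> = real (degree n F i) * x i - (\<Sum>j<n. if F i j then x j else 0)"
    using i by (simp add: sum_subtractf)
  also have "\<dots> = (\<Sum>j<n. if F i j then x i - x j else 0)"
    unfolding degree_eq_sum sum_distrib_right sum_subtractf[symmetric] by (intro sum.cong) auto
  finally show ?thesis .
qed

lemma laplacian_mult_ones: "laplacian n F *\<^sub>v vec n (\<lambda>_. 1) = 0\<^sub>v n"
  using laplacian_mult_vec_index[of _ "\<lambda>_. 1"] by (intro eq_vecI) (auto simp: laplacian_def)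

lemma laplacian_quadratic_form:
  "vec n x \<bullet> (laplacian n F *\<^sub>v vec n x) = (\<Sum>i<n. \<Sum>j<n. if F i j then (x i - x j)^2 else 0) / 2"
proof -
  have sym: "F i j = F j i" for i j using F unfolding simple_graph_def by blast
  define S where "S = (\<Sum>i<n. \<Sum>j<n. if F i j then x i * x i - x i * x j else 0)"
  have "vec n x \<bullet> (laplacian n F *\<^sub>v vec n x) = (\<Sum>i<n. x i * (laplacian n F *\<^sub>v vec n x) $ i)"
    using mult_mat_vec_carrier[OF laplacian_carrier, of "vec n x"] by (subst scalar_prod_lessThan_sum) auto
  also have "\<dots> = S" unfolding S_def
  proof (intro sum.cong refl)
    fix i assume "i \<in> {..<n}"
    hence i: "i < n" by simp
    show "x i * (laplacian n F *\<^sub>v vec n x) $ i = (\<Sum>j<n. if F i j then x i * x i - x i * x j else 0)"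
      unfolding laplacian_mult_vec_index[OF i] sum_distrib_left by (intro sum.cong) (auto simp: algebra_simps)
  qed
  finally have "vec n x \<bullet> (laplacian n F *\<^sub>v vec n x) = S" .
  moreover have "S = (\<Sum>i<n. \<Sum>j<n. if F i j then x j * x j - x j * x i else 0)"
    unfolding S_def by (subst sum.swap) (simp add: sym)
  ultimately have "2 * (vec n x \<bullet> (laplacian n F *\<^sub>v vec n x))
      = (\<Sum>i<n. \<Sum>j<n. (if F i j then x i * x i - x i * x j else 0)
          + (if F i j then x j * x j - x j * x i else 0))"
    unfolding S_def by (simp add: sum.distrib)
  also have "\<dots> = (\<Sum>i<n. \<Sum>j<n. if F i j then (x i - x j)^2 else 0)"
    by (intro sum.cong refl) (auto simp: power2_eq_square algebra_simps)
  finally show ?thesis by simp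
qed

lemma algebraic_connectivity_le_rayleigh:
  assumes sum0: "(\<Sum>i<n. x i) = 0" and nonzero: "\<exists>i<n. x i \<noteq> 0"
  shows "algebraic_connectivity n F
    \<le> (\<Sum>i<n. \<Sum>j<n. if F i j then (x i - x j)^2 else 0) / (2 * (\<Sum>i<n. (x i)^2))"
    (is "_ \<le> ?energy / (2 * ?norm)")
proof -
  define v where "v = vec n x"
  have v: "v \<in> carrier_vec n" unfolding v_def by simp
  have v0: "v \<noteq> 0\<^sub>v n" using nonzero unfolding v_def by (metis index_vec index_zero_vec(1))
  have v1: "v \<bullet> vec n (\<lambda>_. 1) = 0" using sum0 unfolding v_def by (simp add: scalar_prod_lessThan_sum)
  have vv: "v \<bullet> v = ?norm" unfolding v_def by (simp add: scalar_prod_lessThan_sum power2_eq_square)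
  have norm_pos: "?norm > 0" using real_scalar_prod_self_pos[OF v v0] unfolding vv .
  have "?energy \<ge> 0" by (intro sum_nonneg) auto
  hence c: "?energy / (2 * ?norm) \<ge> 0" using norm_pos by simp
  have "v \<bullet> (laplacian n F *\<^sub>v v) = ?energy / (2 * ?norm) * (v \<bullet> v)"
    unfolding v_def laplacian_quadratic_form vv[unfolded v_def] using norm_pos by simp
  hence "sorted_list_of_multiset (proots (char_poly (laplacian n F))) ! 1 \<le> ?energy / (2 * ?norm)"
    using second_smallest_eigenvalue_le[OF laplacian_carrier transpose_laplacian laplacian_mult_ones
        v v0 v1 _ c] by simp
  thus ?thesis unfolding algebraic_connectivity_def laplacian_eigenvalues_def .
qed

end

section \<open>Quartic chains\<close>

definition nbr_graph :: "nat \<Rightarrow> (nat \<Rightarrow> nat list) \<Rightarrow> nat \<Rightarrow> nat \<Rightarrow> bool" where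
  "nbr_graph n nb i j \<longleftrightarrow> i < n \<and> j < n \<and> j \<in> set (nb i)"

text \<open>The last clause, a smaller neighbour for every vertex but 0, gives connectivity.\<close>
definition quartic_nbrs_at :: "nat \<Rightarrow> (nat \<Rightarrow> nat list) \<Rightarrow> nat \<Rightarrow> bool" where
  "quartic_nbrs_at n nb i \<longleftrightarrow> set (nb i) \<subseteq> {..<n} \<and> i \<notin> set (nb i) \<and> distinct (nb i)
    \<and> length (nb i) = 4 \<and> (\<forall>j\<in>set (nb i). i \<in> set (nb j)) \<and> (0 < i \<longrightarrow> (\<exists>j\<in>set (nb i). j < i))"

context
  fixes n :: nat and nb :: "nat \<Rightarrow> nat list"
  assumes ok: "\<And>i. i < n \<Longrightarrow> quartic_nbrs_at n nb i"
begin

lemma nbr_graph_quartic: "quartic n (nbr_graph n nb)"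
proof -
  have "simple_graph n (nbr_graph n nb)"
    unfolding simple_graph_def nbr_graph_def using ok unfolding quartic_nbrs_at_def by blast
  moreover have "degree n (nbr_graph n nb) i = 4" if i: "i < n" for i
  proof -
    have "{j. j < n \<and> nbr_graph n nb i j} = set (nb i)"
      using ok[OF i] i unfolding nbr_graph_def quartic_nbrs_at_def by auto
    thus ?thesis using ok[OF i] unfolding degree_def quartic_nbrs_at_def by (simp add: distinct_card)
  qed
  ultimately show ?thesis unfolding quartic_def by blast
qed

lemma nbr_graph_connected: "connected_graph n (nbr_graph n nb)"
proof -
  let ?G = "nbr_graph n nb"
  have "symp ?G" using ok unfolding nbr_graph_def quartic_nbrs_at_def by (blast intro: sympI)
  have to0: "?G\<^sup>*\<^sup>* i 0" if "i < n" for i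
    using that
  proof (induction i rule: less_induct)
    case (less i)
    show ?case
    proof (cases "i = 0")
      case False
      then obtain j where j: "j \<in> set (nb i)" "j < i"
        using ok[OF less.prems] unfolding quartic_nbrs_at_def by auto
      hence "?G i j" using less.prems unfolding nbr_graph_def by auto
      moreover have "?G\<^sup>*\<^sup>* j 0" using less.IH[OF j(2)] j(2) less.prems by simp
      ultimately show ?thesis by (rule converse_rtranclp_into_rtranclp)
    qed simp
  qed
  show ?thesis unfolding connected_graph_def
    using to0 sympD[OF symp_rtranclp[OF \<open>symp ?G\<close>]] by (meson rtranclp_trans)
qed

lemma nbr_graph_sum:
  "(\<Sum>i<n. \<Sum>j<n. if nbr_graph n nb i j then f i j else 0) = (\<Sum>i<n. \<Sum>j\<leftarrow>nb i. f i j)"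
proof (rule sum.cong[OF refl])
  fix i assume "i \<in> {..<n}"
  hence i: "i < n" by simp
  have sub: "set (nb i) \<subseteq> {..<n}" and dist: "distinct (nb i)"
    using ok[OF i] unfolding quartic_nbrs_at_def by auto
  have "(\<Sum>j<n. if nbr_graph n nb i j then f i j else 0) = (\<Sum>j\<in>set (nb i). f i j)"
    using sub i unfolding nbr_graph_def by (subst sum.inter_filter[symmetric]) (auto intro!: sum.cong)
  also have "\<dots> = (\<Sum>j\<leftarrow>nb i. f i j)" using dist by (simp add: sum_list_distinct_conv_sum_set)
  finally show "(\<Sum>j<n. if nbr_graph n nb i j then f i j else 0) = (\<Sum>j\<leftarrow>nb i. f i j)" .
qed

end

definition nbr_stretch :: "(nat \<Rightarrow> nat list) \<Rightarrow> nat \<Rightarrow> int" where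
  "nbr_stretch nb i = (\<Sum>j\<leftarrow>nb i. (int i - int j)^2)"

text \<open>The graphs below lie along the path 0, ..., n-1: an end gadget on the first r and on the
  last s vertices, and in between cut vertices alternating with copies of K4, each cut vertex
  joined to two vertices on either side. In \<open>block_nbrs t i\<close> the vertex i has position
  t = (i - r) mod 5: the cut vertices are those with t = 0. Every edge joins vertices at distance
  at most 3.\<close>

definition end_gadget :: "nat \<Rightarrow> nat list list" where
  "end_gadget r = (if r = 5 then [[1,2,3,4], [0,2,3,4], [0,1,3,4], [0,1,2,5], [0,1,2,5]]
    else if r = 6 then [[1,2,3,5], [0,2,3,5], [0,1,3,4], [0,1,2,4], [2,3,5,6], [0,1,4,6]]
    else [[1,2,3,4], [0,2,3,4], [0,1,3,6], [0,1,2,5], [0,1,5,6], [3,4,6,7], [2,4,5,7]])"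

definition block_nbrs :: "nat \<Rightarrow> nat \<Rightarrow> nat list" where
  "block_nbrs t i = (if t = 1 then [i - 1, i + 1, i + 2, i + 3]
    else if t = 4 then [i - 3, i - 2, i - 1, i + 1] else [i - 2, i - 1, i + 1, i + 2])"

definition chain_nbrs :: "nat \<Rightarrow> nat \<Rightarrow> nat \<Rightarrow> nat \<Rightarrow> nat list" where
  "chain_nbrs r s n i = (if i < r then end_gadget r ! i
    else if n - s \<le> i then map (\<lambda>j. n - 1 - j) (end_gadget s ! (n - 1 - i))
    else block_nbrs ((i - r) mod 5) i)"

lemma sum_of_nat_lessThan: "(\<Sum>i<n. real i) = real n * (real n - 1) / 2"
  by (induct n) (auto simp: field_simps)

lemma sum_of_nat_squares_lessThan: "(\<Sum>i<n. (real i)^2) = real n * (real n - 1) * (2 * real n - 1) / 6"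
  by (induct n) (auto simp: field_simps power2_eq_square)

locale quartic_chain =
  fixes r s k n :: nat
  assumes r: "r \<in> {5, 6, 7}" and s: "s \<in> {5, 6, 7}" and order_eq: "n = r + s + 1 + 5 * k"
begin

lemma left_gadget_vertex:
  assumes "i < r"
  shows "quartic_nbrs_at n (chain_nbrs r s n) i \<and> nbr_stretch (chain_nbrs r s n) i \<le> 43"
proof -
  have "i \<in> {0, 1, 2, 3, 4, 5, 6}" using assms r by auto
  with r s assms show ?thesis
    unfolding quartic_nbrs_at_def nbr_stretch_def order_eq
    by (elim insertE emptyE; simp add: chain_nbrs_def end_gadget_def block_nbrs_def)
qed

lemma right_gadget_vertex:
  assumes "a < s"
  shows "quartic_nbrs_at n (chain_nbrs r s n) (n - 1 - a) \<and> nbr_stretch (chain_nbrs r s n) (n - 1 - a) \<le> 43"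
proof -
  have "a \<in> {0, 1, 2, 3, 4, 5, 6}" using assms s by auto
  with r s assms show ?thesis
    unfolding quartic_nbrs_at_def nbr_stretch_def order_eq
    by (elim insertE emptyE; simp add: chain_nbrs_def end_gadget_def block_nbrs_def)
qed

text \<open>Writing i = r + 5q + t and k = q + m, the neighbourhoods only depend on t and on whether
  q and m vanish, so finitely many symbolic cases remain.\<close>
lemma middle_vertex:
  assumes "r \<le> i" "i < n - s"
  shows "quartic_nbrs_at n (chain_nbrs r s n) i \<and> nbr_stretch (chain_nbrs r s n) i \<le> 15"
proof -
  define q where "q = (i - r) div 5"
  define t where "t = (i - r) mod 5"
  have i: "i = r + 5 * q + t" unfolding q_def t_def using assms by simp
  have "t < 5" unfolding t_def by simp
  hence "t \<in> {0, 1, 2, 3, 4}" by auto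
  have "5 * q + t \<le> 5 * k" using assms i order_eq by simp
  hence "q \<le> k" and qk: "t > 0 \<Longrightarrow> q < k" by auto
  then obtain m where k: "k = q + m" using le_Suc_ex by blast
  with qk have tm: "t > 0 \<Longrightarrow> m > 0" by simp
  have "q = 0 \<or> (\<exists>q'. q = Suc q')" "m = 0 \<or> (\<exists>m'. m = Suc m')" by (metis not0_implies_Suc)+
  with \<open>t \<in> {0, 1, 2, 3, 4}\<close> r s tm show ?thesis
    unfolding quartic_nbrs_at_def nbr_stretch_def order_eq i k
    by (elim disjE insertE emptyE exE; simp add: chain_nbrs_def end_gadget_def block_nbrs_def)
qed

lemma chain_vertex:
  assumes i: "i < n"
  shows "quartic_nbrs_at n (chain_nbrs r s n) i
    \<and> nbr_stretch (chain_nbrs r s n) i \<le> (if i < r \<or> n - s \<le> i then 43 else 15)"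
proof -
  consider "i < r" | "n - s \<le> i" | "r \<le> i" "i < n - s" by linarith
  thus ?thesis
  proof cases
    case 2
    hence "n - 1 - (n - 1 - i) = i" "n - 1 - i < s" using i by auto
    thus ?thesis using 2 right_gadget_vertex[of "n - 1 - i"] by simp
  qed (use left_gadget_vertex middle_vertex in auto)
qed

lemma chain_quartic: "quartic n (nbr_graph n (chain_nbrs r s n))"
  using nbr_graph_quartic chain_vertex by blast

lemma chain_connected: "connected_graph n (nbr_graph n (chain_nbrs r s n))"
  using nbr_graph_connected chain_vertex by blast

lemma chain_stretch_sum: "(\<Sum>i<n. real_of_int (nbr_stretch (chain_nbrs r s n) i)) \<le> 15 * real n + 392"
proof -
  define E where "E = {..<r} \<union> {n - s..<n}"
  have "(\<Sum>i<n. real_of_int (nbr_stretch (chain_nbrs r s n) i)) \<le> (\<Sum>i<n. 15 + (if i \<in> E then 28 else 0))"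
    using chain_vertex unfolding E_def by (intro sum_mono) (fastforce split: if_splits)
  also have "\<dots> = 15 * real n + 28 * real (card ({..<n} \<inter> E))"
    by (simp add: sum.distrib sum.inter_restrict[symmetric])
  also have "card ({..<n} \<inter> E) \<le> r + s"
    using card_mono[of E "{..<n} \<inter> E"] card_Un_le[of "{..<r}" "{n - s..<n}"] unfolding E_def by auto
  hence "28 * real (card ({..<n} \<inter> E)) \<le> 392" using r s by auto
  finally show ?thesis by simp
qed

lemma order_ge_11: "n \<ge> 11"
  using order_eq r s by auto

text \<open>The Rayleigh quotient of the linear vector x i = 2 i - (n - 1): its energy is at most
  4 (15 n + 392) by the stretch bound, and its squared norm is (n^3 - n) / 3.\<close>
lemma chain_connectivity_le_linear:
  "algebraic_connectivity n (nbr_graph n (chain_nbrs r s n)) \<le> 6 * (15 * real n + 392) / (real n ^ 3 - real n)"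
proof -
  define N where "N = real n"
  define x where "x i = 2 * real i - (N - 1)" for i
  have N: "N \<ge> 11" unfolding N_def using order_ge_11 by simp
  have sg: "simple_graph n (nbr_graph n (chain_nbrs r s n))" using chain_quartic unfolding quartic_def by blast
  have sum0: "(\<Sum>i<n. x i) = 0"
    unfolding x_def N_def by (simp add: sum_subtractf sum_distrib_left[symmetric] sum_of_nat_lessThan)
  have "(\<Sum>i<n. (x i)^2) = (\<Sum>i<n. 4 * (real i)^2 - 4 * (N - 1) * real i + (N - 1)^2)"
    unfolding x_def by (rule sum.cong) (auto simp: power2_eq_square algebra_simps)
  also have "\<dots> = 4 * (\<Sum>i<n. (real i)^2) - 4 * (N - 1) * (\<Sum>i<n. real i) + N * (N - 1)^2"
    by (simp add: sum.distrib sum_subtractf sum_distrib_left N_def)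
  also have "\<dots> = (N^3 - N) / 3"
    unfolding sum_of_nat_lessThan sum_of_nat_squares_lessThan N_def[symmetric]
    by (simp add: field_simps power2_eq_square power3_eq_cube)
  finally have norm: "(\<Sum>i<n. (x i)^2) = (N^3 - N) / 3" .
  have nonzero: "\<exists>i<n. x i \<noteq> 0" using order_ge_11 N by (intro exI[of _ 0]) (simp add: x_def)
  have "(\<Sum>i<n. \<Sum>j<n. if nbr_graph n (chain_nbrs r s n) i j then (x i - x j)^2 else 0)
      = (\<Sum>i<n. \<Sum>j\<leftarrow>chain_nbrs r s n i. (x i - x j)^2)"
    by (rule nbr_graph_sum) (use chain_vertex in blast)
  also have "\<dots> = (\<Sum>i<n. \<Sum>j\<leftarrow>chain_nbrs r s n i. 4 * real_of_int ((int i - int j)^2))"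
    by (intro sum.cong refl arg_cong[where f = sum_list] map_cong) (auto simp: x_def power2_eq_square algebra_simps)
  also have "\<dots> = 4 * (\<Sum>i<n. real_of_int (nbr_stretch (chain_nbrs r s n) i))"
    unfolding nbr_stretch_def by (simp add: sum_list_const_mult sum_distrib_left o_def flip: sum_list_of_int)
  also have "\<dots> \<le> 4 * (15 * N + 392)" using chain_stretch_sum unfolding N_def by simp
  finally have energy: "(\<Sum>i<n. \<Sum>j<n. if nbr_graph n (chain_nbrs r s n) i j then (x i - x j)^2 else 0)
      \<le> 4 * (15 * N + 392)" .
  have "N^3 - N = N * (N^2 - 1)" by (simp add: power3_eq_cube power2_eq_square algebra_simps)
  moreover have "1 < N^2" using one_less_power[of N 2] N by simp
  ultimately have "N^3 - N > 0" using N by simp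
  show ?thesis
    using algebraic_connectivity_le_rayleigh[OF sg sum0 nonzero] energy \<open>N^3 - N > 0\<close>
    unfolding norm N_def[symmetric] by (auto simp: field_simps elim!: order.trans)
qed

end

section \<open>Test vectors\<close>

definition rayleigh_certificate :: "nat \<Rightarrow> (nat \<Rightarrow> nat list) \<Rightarrow> int \<Rightarrow> int list \<Rightarrow> bool" where
  "rayleigh_certificate n nb b xs \<longleftrightarrow> length xs = n \<and> sum_list xs = 0
    \<and> 1000 * (\<Sum>i<n. \<Sum>j\<leftarrow>nb i. (xs ! i - xs ! j)^2) < b * 2 * (\<Sum>i<n. (xs ! i)^2)"

lemma algebraic_connectivity_lt_certificate:
  assumes ok: "\<And>i. i < n \<Longrightarrow> quartic_nbrs_at n nb i" and cert: "rayleigh_certificate n nb b xs"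
  shows "algebraic_connectivity n (nbr_graph n nb) < real_of_int b / 1000"
proof -
  define x where "x i = real_of_int (xs ! i)" for i
  define E where "E = (\<Sum>i<n. \<Sum>j\<leftarrow>nb i. (xs ! i - xs ! j)^2)"
  define X where "X = (\<Sum>i<n. (xs ! i)^2)"
  have len: "length xs = n" and "sum_list xs = 0" and ineq: "1000 * E < b * 2 * X"
    using cert unfolding rayleigh_certificate_def E_def X_def by auto
  have "E \<ge> 0" unfolding E_def by (intro sum_nonneg sum_list_nonneg) auto
  moreover have "X \<ge> 0" unfolding X_def by (intro sum_nonneg) auto
  ultimately have X: "X > 0" using ineq by (cases "X = 0") auto
  have sg: "simple_graph n (nbr_graph n nb)" using nbr_graph_quartic[OF ok] unfolding quartic_def by blast
  have "(\<Sum>i<n. x i) = real_of_int (sum_list xs)"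
    unfolding x_def using len by (simp add: sum_list_sum_nth lessThan_atLeast0)
  hence sum0: "(\<Sum>i<n. x i) = 0" using \<open>sum_list xs = 0\<close> by simp
  have norm: "(\<Sum>i<n. (x i)^2) = real_of_int X" unfolding x_def X_def by simp
  have nonzero: "\<exists>i<n. x i \<noteq> 0"
  proof (rule ccontr)
    assume "\<not> ?thesis"
    hence "(\<Sum>i<n. (x i)^2) = 0" by simp
    thus False using X norm by simp
  qed
  have "(\<Sum>i<n. \<Sum>j<n. if nbr_graph n nb i j then (x i - x j)^2 else 0) = (\<Sum>i<n. \<Sum>j\<leftarrow>nb i. (x i - x j)^2)"
    by (rule nbr_graph_sum[OF ok])
  also have "\<dots> = real_of_int E"
    unfolding E_def x_def by (simp add: o_def flip: sum_list_of_int)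
  finally have energy: "(\<Sum>i<n. \<Sum>j<n. if nbr_graph n nb i j then (x i - x j)^2 else 0) = real_of_int E" .
  have "real_of_int E / (2 * real_of_int X) < real_of_int b / 1000"
    using ineq X by (simp add: field_simps flip: of_int_mult of_int_less_iff)
  thus ?thesis using algebraic_connectivity_le_rayleigh[OF sg sum0 nonzero] unfolding energy norm by simp
qed

definition left_gadget_size :: "nat \<Rightarrow> nat" where
  "left_gadget_size n = [5, 5, 6, 6, 7] ! ((n - 11) mod 5)"

definition right_gadget_size :: "nat \<Rightarrow> nat" where
  "right_gadget_size n = [5, 6, 6, 7, 7] ! ((n - 11) mod 5)"

definition chain_of_order :: "nat \<Rightarrow> nat \<Rightarrow> nat list" where
  "chain_of_order n = chain_nbrs (left_gadget_size n) (right_gadget_size n) n"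

lemma quartic_chain_of_order:
  assumes "n \<ge> 11"
  shows "quartic_chain (left_gadget_size n) (right_gadget_size n) ((n - 11) div 5) n"
proof -
  define t where "t = (n - 11) mod 5"
  have "n = 11 + 5 * ((n - 11) div 5) + t" unfolding t_def using assms by simp
  moreover have "t < 5" unfolding t_def by simp
  hence "t \<in> {0, 1, 2, 3, 4}" by auto
  ultimately show ?thesis
    unfolding quartic_chain_def left_gadget_size_def right_gadget_size_def t_def[symmetric] by auto
qed

definition connectivity_bound_permille :: "nat \<Rightarrow> int" where
  "connectivity_bound_permille n =
    (if n < 13 then 355 else if n < 18 then 268 else if n < 21 then 129 else if n < 26 then 91 else 59)"

text \<open>Integer test vectors, close to Fiedler vectors, for the chains of orders 11, ..., 48; the
  vector for order n has index n - 11.\<close>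
definition small_test_vectors :: "int list list" where
  "small_test_vectors =
    [[100000, 100000, 100000, 82288, 82288, 0, -82288, -82288, -100000, -100000, -100000],
     [100002, 100000, 100000, 84593, 84593, 12306, -61877, -61877, -89435, -89435, -89435, -89435],
     [100000, 100000, 100000, 100000, 73205, 73205, 0, -73205, -73205, -100000, -100000, -100000,
      -100000],
     [-100001, -100000, -100000, -100000, -75947, -75947, -9575, 57949, 57949, 80632, 88852, 88852,
      93618, 93618],
     [100000, 100000, 95432, 95432, 87583, 65727, 65727, 0, -65727, -65727, -87583, -95432, -95432,
      -100000, -100000],
     [-100000, -100000, -100000, -92076, -92076, -53713, -11094, -11094, 11094, 11094, 53713, 92076,
      92076, 100000, 100000, 100000],
     [99998, 100000, 100000, 92884, 92884, 58318, 19602, 19602, -1150, -1150, -42492, -80810,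
      -80810, -94219, -94219, -94219, -94219],
     [100000, 100000, 100000, 100000, 87183, 87183, 50376, 10340, 10340, -10340, -10340, -50376,
      -87183, -87183, -100000, -100000, -100000, -100000],
     [100003, 100000, 100000, 100000, 88265, 88265, 54437, 17415, 17415, -2118, -2118, -40935,
      -77350, -77350, -88999, -93040, -93040, -95425, -95425],
     [100000, 100000, 97708, 97708, 93831, 82618, 82618, 47431, 9695, 9695, -9695, -9695, -47431,
      -82618, -82618, -93831, -97708, -97708, -100000, -100000],
     [-100000, -100000, -100000, -95476, -95476, -73264, -47738, -47738, -32815, -32815, 0, 32815,
      32815, 47738, 47738, 73264, 95476, 95476, 100000, 100000, 100000],
     [100000, 100000, 100000, 95848, 95848, 75434, 51888, 51888, 37961, 37961, 6954, -24341, -24341,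
      -38978, -38978, -65016, -88354, -88354, -96355, -96355, -96355, -96355],
     [100000, 100000, 100000, 100000, 92361, 92361, 70029, 45022, 45022, 30799, 30799, 0, -30799,
      -30799, -45022, -45022, -70029, -92361, -92361, -100000, -100000, -100000, -100000],
     [99999, 100000, 100000, 100000, 92905, 92905, 72123, 48783, 48783, 35382, 35382, 6070, -23457,
      -23457, -37389, -37389, -62599, -85588, -85588, -92813, -95280, -95280, -96746, -96746],
     [100000, 100000, 98591, 98591, 96221, 89267, 89267, 67100, 42720, 42720, 29120, 29120, 0,
      -29120, -29120, -42720, -42720, -67100, -89267, -89267, -96221, -98591, -98591, -100000,
      -100000],
     [100000, 100000, 100000, 97066, 97066, 82571, 65652, 65652, 55267, 55267, 31255, 6325, 6325,
      -6325, -6325, -31255, -55267, -55267, -65652, -65652, -82571, -97066, -97066, -100000,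
      -100000, -100000],
     [998, 1000, 1000, 973, 973, 838, 680, 680, 582, 582, 355, 119, 119, -3, -3, -246, -482, -482,
      -587, -587, -765, -922, -922, -975, -975, -975, -975],
     [-1000, -1000, -1000, -1000, -949, -949, -799, -628, -628, -527, -527, -297, -60, -60, 60, 60,
      297, 527, 527, 628, 628, 799, 949, 949, 1000, 1000, 1000, 1000],
     [1000, 1000, 1000, 1000, 952, 952, 811, 650, 650, 554, 554, 336, 110, 110, -6, -6, -237, -463,
      -463, -565, -565, -741, -900, -900, -949, -966, -966, -976, -976],
     [1000, 1000, 990, 990, 974, 927, 927, 774, 603, 603, 504, 504, 284, 57, 57, -57, -57, -284,
      -504, -504, -603, -603, -774, -927, -927, -974, -990, -990, -1000, -1000],
     [1000, 1000, 1000, 979, 979, 877, 757, 757, 682, 682, 502, 313, 313, 211, 211, 0, -211, -211,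
      -313, -313, -502, -682, -682, -757, -757, -877, -979, -979, -1000, -1000, -1000],
     [998, 1000, 1000, 981, 981, 885, 771, 771, 700, 700, 530, 349, 349, 252, 252, 48, -156, -156,
      -256, -256, -444, -624, -624, -702, -702, -831, -944, -944, -982, -982, -982, -982],
     [1000, 1000, 1000, 1000, 963, 963, 855, 732, 732, 656, 656, 482, 299, 299, 202, 202, 0, -202,
      -202, -299, -299, -482, -656, -656, -732, -732, -855, -963, -963, -1000, -1000, -1000, -1000],
     [-1000, -1000, -1000, -1000, -965, -965, -863, -746, -746, -674, -674, -508, -333, -333, -239,
      -239, -44, 151, 151, 247, 247, 429, 603, 603, 680, 680, 810, 926, 926, 962, 975, 975, 982,
      982],
     [1000, 1000, 993, 993, 981, 946, 946, 834, 708, 708, 634, 634, 464, 287, 287, 193, 193, 0,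
      -193, -193, -287, -287, -464, -634, -634, -708, -708, -834, -946, -946, -981, -993, -993,
      -1000, -1000],
     [1000, 1000, 1000, 985, 985, 909, 819, 819, 762, 762, 624, 477, 477, 396, 396, 222, 45, 45,
      -45, -45, -222, -396, -396, -477, -477, -624, -762, -762, -819, -819, -909, -985, -985, -1000,
      -1000, -1000],
     [999, 1000, 1000, 986, 986, 914, 829, 829, 774, 774, 643, 502, 502, 424, 424, 257, 86, 86, -1,
      -1, -175, -346, -346, -427, -427, -575, -716, -716, -776, -776, -873, -958, -958, -986, -986,
      -986, -986],
     [1000, 1000, 1000, 1000, 973, 973, 891, 797, 797, 739, 739, 603, 459, 459, 380, 380, 213, 43,
      43, -43, -43, -213, -380, -380, -459, -459, -603, -739, -739, -797, -797, -891, -973, -973,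
      -1000, -1000, -1000, -1000],
     [1001, 1000, 1000, 1000, 974, 974, 896, 807, 807, 751, 751, 621, 483, 483, 407, 407, 246, 81,
      81, -3, -3, -169, -334, -334, -412, -412, -557, -695, -695, -755, -755, -855, -944, -944,
      -971, -980, -980, -986, -986],
     [-1000, -1000, -995, -995, -986, -959, -959, -873, -777, -777, -718, -718, -584, -443, -443,
      -367, -367, -205, -41, -41, 41, 41, 205, 367, 367, 443, 443, 584, 718, 718, 777, 777, 873,
      959, 959, 986, 995, 995, 1000, 1000],
     [1000, 1000, 1000, 988, 988, 930, 860, 860, 816, 816, 707, 590, 590, 524, 524, 381, 233, 233,
      157, 157, 0, -157, -157, -233, -233, -381, -524, -524, -590, -590, -707, -816, -816, -860,
      -860, -930, -988, -988, -1000, -1000, -1000],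
     [996, 1000, 1000, 989, 989, 933, 867, 867, 824, 824, 720, 608, 608, 545, 545, 407, 264, 264,
      190, 190, 37, -116, -116, -191, -191, -338, -480, -480, -546, -546, -666, -778, -778, -825,
      -825, -901, -967, -967, -989, -989, -989, -989],
     [1000, 1000, 1000, 1000, 979, 979, 915, 841, 841, 795, 795, 687, 571, 571, 507, 507, 368, 225,
      225, 151, 151, 0, -151, -151, -225, -225, -368, -507, -507, -571, -571, -687, -795, -795,
      -841, -841, -915, -979, -979, -1000, -1000, -1000, -1000],
     [999, 1000, 1000, 1000, 980, 980, 918, 848, 848, 804, 804, 700, 588, 588, 526, 526, 392, 254,
      254, 182, 182, 35, -113, -113, -186, -186, -327, -465, -465, -530, -530, -647, -758, -758,
      -806, -806, -885, -955, -955, -977, -984, -984, -989, -989],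
     [1000, 1000, 996, 996, 989, 968, 968, 900, 823, 823, 777, 777, 669, 554, 554, 491, 491, 356,
      217, 217, 146, 146, 0, -146, -146, -217, -217, -356, -491, -491, -554, -554, -669, -777, -777,
      -823, -823, -900, -968, -968, -989, -996, -996, -1000, -1000],
     [1000, 1000, 1000, 991, 991, 944, 889, 889, 853, 853, 765, 670, 670, 617, 617, 498, 374, 374,
      309, 309, 173, 35, 35, -35, -35, -173, -309, -309, -374, -374, -498, -617, -617, -670, -670,
      -765, -853, -853, -889, -889, -944, -991, -991, -1000, -1000, -1000],
     [-1001, -1000, -1000, -991, -991, -946, -893, -893, -859, -859, -775, -683, -683, -632, -632,
      -517, -397, -397, -334, -334, -201, -67, -67, 1, 1, 136, 270, 270, 335, 335, 459, 578, 578,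
      632, 632, 730, 821, 821, 860, 860, 921, 974, 974, 991, 991, 991, 991],
     [1000, 1000, 1000, 1000, 983, 983, 932, 872, 872, 835, 835, 747, 652, 652, 599, 599, 483, 362,
      362, 299, 299, 167, 33, 33, -33, -33, -167, -299, -299, -362, -362, -483, -599, -599, -652,
      -652, -747, -835, -835, -872, -872, -932, -983, -983, -1000, -1000, -1000, -1000]]"

lemma linear_bound_lt:
  fixes N :: real
  assumes N: "N \<ge> 49"
  shows "6 * (15 * N + 392) / (N ^ 3 - N) < 59 / 1000"
proof -
  have "49 * 49 \<le> N * N" using N by (intro mult_mono) auto
  from mult_right_mono[OF this, of N] N have "N^3 \<ge> 2401 * N" by (simp add: power3_eq_cube)
  moreover from this N have "N^3 - N > 0" by simp
  ultimately show ?thesis using N by (simp add: field_simps)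
qed

lemma small_test_vectors_certify:
  "list_all (\<lambda>n. rayleigh_certificate n (chain_of_order n) (connectivity_bound_permille n)
    (small_test_vectors ! (n - 11))) [11..<49]"
  by code_simp

lemma chain_of_order_connectivity_lt:
  assumes "n \<ge> 11"
  shows "algebraic_connectivity n (nbr_graph n (chain_of_order n))
    < real_of_int (connectivity_bound_permille n) / 1000"
proof -
  interpret quartic_chain "left_gadget_size n" "right_gadget_size n" "(n - 11) div 5" n
    using quartic_chain_of_order[OF assms] .
  show ?thesis
  proof (cases "n < 49")
    case True
    have "\<forall>m\<in>{11..<49}. rayleigh_certificate m (chain_of_order m) (connectivity_bound_permille m)
        (small_test_vectors ! (m - 11))"
      using small_test_vectors_certify by (simp only: list_all_iff set_upt)
    moreover have "n \<in> {11..<49}" using assms True by simp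
    ultimately have "rayleigh_certificate n (chain_of_order n) (connectivity_bound_permille n)
        (small_test_vectors ! (n - 11))" by (rule bspec)
    thus ?thesis
      using algebraic_connectivity_lt_certificate chain_vertex unfolding chain_of_order_def by blast
  next
    case False
    have "algebraic_connectivity n (nbr_graph n (chain_of_order n))
        \<le> 6 * (15 * real n + 392) / (real n ^ 3 - real n)"
      using chain_connectivity_le_linear unfolding chain_of_order_def .
    also have "\<dots> < 59 / 1000" using False by (intro linear_bound_lt) simp
    also have "59 / 1000 = real_of_int (connectivity_bound_permille n) / 1000"
      using False by (simp add: connectivity_bound_permille_def)
    finally show ?thesis .
  qed
qed

theorem lemma3:
  fixes n :: nat and E :: "nat \<Rightarrow> nat \<Rightarrow> bool"
  assumes "n \<ge> 11"
    and "quartic n E" and "connected_graph n E"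
    and "\<forall>F. quartic n F \<and> connected_graph n F \<longrightarrow>
               algebraic_connectivity n E \<le> algebraic_connectivity n F"
  shows "(n \<ge> 11 \<longrightarrow> algebraic_connectivity n E < 0.355) \<and>
         (n \<ge> 13 \<longrightarrow> algebraic_connectivity n E < 0.268) \<and>
         (n \<ge> 18 \<longrightarrow> algebraic_connectivity n E < 0.129) \<and>
         (n \<ge> 21 \<longrightarrow> algebraic_connectivity n E < 0.091) \<and>
         (n \<ge> 26 \<longrightarrow> algebraic_connectivity n E < 0.059)"
proof -
  interpret quartic_chain "left_gadget_size n" "right_gadget_size n" "(n - 11) div 5" n
    using quartic_chain_of_order[OF assms(1)] .
  have "algebraic_connectivity n E \<le> algebraic_connectivity n (nbr_graph n (chain_of_order n))"
    using assms(4) chain_quartic chain_connected unfolding chain_of_order_def by blast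
  also have "\<dots> < real_of_int (connectivity_bound_permille n) / 1000"
    by (rule chain_of_order_connectivity_lt[OF assms(1)])
  finally show ?thesis unfolding connectivity_bound_permille_def by (auto split: if_splits)
qed

end
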